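(* Let $n\ge3$, $k\ge0$, let $R$ be a maximal reversible set in $G_n^k$ which is not a canonical reversible set, and let $x_1,\dots,x_{k+1}$ be a consistent labeling of $A(R)$. Let $i$ be the least positive integer with $|B(x_i,R)|\neq k+2-i$. Then: (1) $2\le i\le k-n+2$; (2) $|B(x_i,R)|=k+4-i-n$; (3) for every $j\in\{i+1,\dots,k+1\}$, $|B(x_j,R)|\le k+3-i-n$.
   Context: For integers $n\ge3$, $k\ge0$, the crown $S_n^k$ is the poset with ground set $A\cup B$, $A=\{a_1,\dots,a_{n+k}\}$, $B=\{b_1,\dots,b_{n+k}\}$, indices cyclic modulo $n+k$; elements of $A$ are pairwise incomparable, as are elements of $B$, and $a_i$ is incomparable to $b_j$ when $j\in\{i,\dots,i+k\}$ (mod $n+k$), while $a_i<b_j$ otherwise. $\mathrm{Inc}(A,B)$ is the set of pairs $(a,b)\in A\times B$ with $a$ incomparable to $b$; $G_n^k$ has vertex set $\mathrm{Inc}(A,B)$, with $(a,b)$ adjacent to $(x,y)$ iff $a<y$ and $x<b$. A set $R\subseteq\mathrm{Inc}(A,B)$ is reversible if some linear extension $L$ of $S_n^k$ has $b<a$ in $L$ for all $(a,b)\in R$; maximal reversible means maximal under inclusion among reversible sets. For $R\subseteq\mathrm{Inc}(A,B)$ and $a\in A$, $B(a,R)=\{b:(a,b)\in R\}$ and $A(R)=\{a: B(a,R)\ne\emptyset\}$. For maximal reversible $R$, $|A(R)|=k+1$ and the sets $B(a,R)$ form a chain under inclusion; a consistent labeling of $A(R)$ is a labeling $A(R)=\{x_1,\dots,x_{k+1}\}$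 with $B(x_\beta,R)\subseteq B(x_\alpha,R)$ whenever $\alpha<\beta$. A subset of $A$ is contiguous if it is a block of cyclically consecutive elements; a sequence $\sigma=(x_1,\dots,x_r)$ of distinct elements of $A$ is $h$-contiguous if each $\{x_1,\dots,x_i\}$ is contiguous. $T(\sigma)$ contains every $(x_1,b)\in\mathrm{Inc}(A,B)$, and for $1\le i<r$ contains $(x_{i+1},b)$ iff $(x_{i+1},b)\in\mathrm{Inc}(A,B)$ and $(x_i,b)\in T(\sigma)$. A canonical reversible set is $T(\sigma)$ for an $h$-contiguous $\sigma$ of length $k+1$. *)

theory Defs
  imports Main
begin

text \<open>Elements of the crown S_n^k: a_i is CA i, b_j is CB j, with indices in {0..<n+k}
  (indices are taken cyclically modulo n+k).\<close>
datatype celem = CA nat | CB nat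

definition ground :: "nat \<Rightarrow> nat \<Rightarrow> celem set" where
  "ground n k = {CA i | i. i < n + k} \<union> {CB j | j. j < n + k}"

definition Aset :: "nat \<Rightarrow> nat \<Rightarrow> celem set" where
  "Aset n k = {CA i | i. i < n + k}"

definition Bset :: "nat \<Rightarrow> nat \<Rightarrow> celem set" where
  "Bset n k = {CB j | j. j < n + k}"

text \<open>a_i incomparable to b_j iff j \<in> {i,...,i+k} mod (n+k).\<close>
definition incomp_idx :: "nat \<Rightarrow> nat \<Rightarrow> nat \<Rightarrow> nat \<Rightarrow> bool" where
  "incomp_idx n k i j \<longleftrightarrow> (j + (n + k) - i) mod (n + k) \<le> k"

definition crown_less :: "nat \<Rightarrow> nat \<Rightarrow> celem \<Rightarrow> celem \<Rightarrow> bool" where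
  "crown_less n k x y \<longleftrightarrow>
     (\<exists>i j. x = CA i \<and> y = CB j \<and> i < n + k \<and> j < n + k \<and> \<not> incomp_idx n k i j)"

definition Inc :: "nat \<Rightarrow> nat \<Rightarrow> (celem \<times> celem) set" where
  "Inc n k = {(CA i, CB j) | i j. i < n + k \<and> j < n + k \<and> incomp_idx n k i j}"

definition before :: "celem list \<Rightarrow> celem \<Rightarrow> celem \<Rightarrow> bool" where
  "before L x y \<longleftrightarrow> (\<exists>p q. p < q \<and> q < length L \<and> L ! p = x \<and> L ! q = y)"

text \<open>Linear extensions, represented as lists enumerating the ground set bottom to top.\<close>
definition lin_ext :: "nat \<Rightarrow> nat \<Rightarrow> celem list \<Rightarrow> bool" where
  "lin_ext n k L \<longleftrightarrow> distinct L \<and> set L = ground n k \<and>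
     (\<forall>x y. crown_less n k x y \<longrightarrow> before L x y)"

definition reversible :: "nat \<Rightarrow> nat \<Rightarrow> (celem \<times> celem) set \<Rightarrow> bool" where
  "reversible n k R \<longleftrightarrow> R \<subseteq> Inc n k \<and>
     (\<exists>L. lin_ext n k L \<and> (\<forall>(a, b) \<in> R. before L b a))"

definition max_reversible :: "nat \<Rightarrow> nat \<Rightarrow> (celem \<times> celem) set \<Rightarrow> bool" where
  "max_reversible n k R \<longleftrightarrow> reversible n k R \<and>
     (\<forall>R'. reversible n k R' \<and> R \<subseteq> R' \<longrightarrow> R' = R)"

definition Bof :: "celem \<Rightarrow> (celem \<times> celem) set \<Rightarrow> celem set" where
  "Bof a R = {b. (a, b) \<in> R}"

definition AofR :: "(celem \<times> celem) set \<Rightarrow> celem set" where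
  "AofR R = {a. Bof a R \<noteq> {}}"

definition consistent_labeling :: "nat \<Rightarrow> (celem \<times> celem) set \<Rightarrow> (nat \<Rightarrow> celem) \<Rightarrow> bool" where
  "consistent_labeling k R x \<longleftrightarrow> bij_betw x {1..k+1} (AofR R) \<and>
     (\<forall>\<alpha> \<in> {1..k+1}. \<forall>\<beta> \<in> {1..k+1}. \<alpha> < \<beta> \<longrightarrow> Bof (x \<beta>) R \<subseteq> Bof (x \<alpha>) R)"

definition contiguous :: "nat \<Rightarrow> nat \<Rightarrow> celem set \<Rightarrow> bool" where
  "contiguous n k S \<longleftrightarrow> (\<exists>s l. s < n + k \<and> l \<le> n + k \<and>
     S = {CA ((s + t) mod (n + k)) | t. t < l})"

definition h_contiguous :: "nat \<Rightarrow> nat \<Rightarrow> celem list \<Rightarrow> bool" where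
  "h_contiguous n k \<sigma> \<longleftrightarrow> distinct \<sigma> \<and> set \<sigma> \<subseteq> Aset n k \<and>
     (\<forall>i. 1 \<le> i \<and> i \<le> length \<sigma> \<longrightarrow> contiguous n k (set (take i \<sigma>)))"

text \<open>Tlev n k \<sigma> i: the b's with (\<sigma>!i, b) \<in> T(\<sigma>) (0-indexed list).\<close>
fun Tlev :: "nat \<Rightarrow> nat \<Rightarrow> celem list \<Rightarrow> nat \<Rightarrow> celem set" where
  "Tlev n k \<sigma> 0 = {b. (\<sigma> ! 0, b) \<in> Inc n k}"
| "Tlev n k \<sigma> (Suc i) = {b. (\<sigma> ! Suc i, b) \<in> Inc n k \<and> b \<in> Tlev n k \<sigma> i}"

definition Tset :: "nat \<Rightarrow> nat \<Rightarrow> celem list \<Rightarrow> (celem \<times> celem) set" where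
  "Tset n k \<sigma> = {(\<sigma> ! i, b) | i b. i < length \<sigma> \<and> b \<in> Tlev n k \<sigma> i}"

definition canonical_reversible :: "nat \<Rightarrow> nat \<Rightarrow> (celem \<times> celem) set \<Rightarrow> bool" where
  "canonical_reversible n k R \<longleftrightarrow>
     (\<exists>\<sigma>. h_contiguous n k \<sigma> \<and> length \<sigma> = k + 1 \<and> R = Tset n k \<sigma>)"

end

theory Submission
  imports Defs
begin

text \<open>A maximal reversible set is determined by the order in which a linear extension lists \<open>A\<close>:
  \<open>(a\<^sub>p, b\<^sub>l)\<close> is reversed exactly when \<open>b\<^sub>l\<close> is incomparable to every \<open>a\<close> listed at or
  after \<open>a\<^sub>p\<close>. Hence \<open>|B(x\<^sub>j, R)|\<close> counts the \<open>b\<close> incomparable to all of the \<open>j\<close> topmost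
  elements of \<open>A\<close>. A block of \<open>j\<close> cyclically consecutive elements has exactly \<open>k + 2 - j\<close> of
  them, and adding to a block an element not adjacent to it loses at least two more (here
  \<open>n \<ge> 3\<close> is used). So while the counts are \<open>k + 2 - j\<close> the top segments are blocks, and if
  all of them are, \<open>R\<close> is canonical. At the first defect \<open>i\<close>, let \<open>e\<close> be the offset of the
  \<open>i\<close>-th element from the block of the first \<open>i - 1\<close>. If \<open>e\<close> were too small or too large,
  raising the element adjacent to the block just above the \<open>i\<close>-th one would reverse strictly
  more pairs, against maximality. What remains is \<open>i + n - 2 \<le> e \<le> k\<close>, where the count is
  \<open>k + 4 - i - n\<close>, and every further element destroys at least one more \<open>b\<close>.\<close>

subsection \<open>Reversible sets of rankings\<close>

definition incomp_all :: "nat \<Rightarrow> nat \<Rightarrow> nat set \<Rightarrow> nat set" where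
  "incomp_all n k S = {l. l < n + k \<and> (\<forall>m\<in>S. incomp_idx n k m l)}"

definition upset :: "nat \<Rightarrow> (nat \<Rightarrow> nat) \<Rightarrow> nat \<Rightarrow> nat set" where
  "upset N \<rho> p = {m. m < N \<and> \<rho> p \<le> \<rho> m}"

text \<open>The ranking \<open>\<rho>\<close> records the order in which a linear extension lists \<open>A\<close>.\<close>
definition rank_rev :: "nat \<Rightarrow> nat \<Rightarrow> (nat \<Rightarrow> nat) \<Rightarrow> (celem \<times> celem) set" where
  "rank_rev n k \<rho> = {(CA p, CB l) | p l. p < n + k \<and> l \<in> incomp_all n k (upset (n + k) \<rho> p)}"

lemma rank_rev_iff:
  "(CA p, CB l) \<in> rank_rev n k \<rho> \<longleftrightarrow> p < n + k \<and> l \<in> incomp_all n k (upset (n + k) \<rho> p)"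
  unfolding rank_rev_def by blast

lemma incomp_all_antimono: "S \<subseteq> S' \<Longrightarrow> incomp_all n k S' \<subseteq> incomp_all n k S"
  unfolding incomp_all_def by auto

lemma finite_incomp_all [simp]: "finite (incomp_all n k S)"
  unfolding incomp_all_def by auto

lemma card_image_CB [simp]: "card (CB ` S) = card S"
  by (simp add: card_image inj_on_def)

lemma Bof_rank_rev:
  "p < n + k \<Longrightarrow> Bof (CA p) (rank_rev n k \<rho>) = CB ` incomp_all n k (upset (n + k) \<rho> p)"
  unfolding Bof_def rank_rev_def by auto

subsection \<open>Every ranking yields a reversible set\<close>

lemma before_sort_key:
  assumes "inj_on r (set xs)" "x \<in> set xs" "y \<in> set xs" "r x < r y"
  shows "before (sort_key r xs) x y"
proof -
  let ?L = "sort_key r xs"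
  obtain p where p: "p < length ?L" "?L ! p = x" using assms(2) by (metis in_set_conv_nth set_sort)
  obtain q where q: "q < length ?L" "?L ! q = y" using assms(3) by (metis in_set_conv_nth set_sort)
  have "\<not> q \<le> p"
  proof
    assume "q \<le> p"
    then have "map r ?L ! q \<le> map r ?L ! p"
      using p(1) sorted_nth_mono[OF sorted_sort_key] by (metis length_map)
    then show False using p q assms(4) by simp
  qed
  then show ?thesis unfolding before_def using p q by (metis not_le)
qed

definition ground_list :: "nat \<Rightarrow> celem list" where
  "ground_list N = map CA [0..<N] @ map CB [0..<N]"

lemma set_ground_list: "set (ground_list (n + k)) = ground n k"
  unfolding ground_list_def ground_def by auto

lemma distinct_ground_list: "distinct (ground_list N)"
  unfolding ground_list_def by (auto simp: distinct_map inj_on_def)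

definition below_height :: "nat \<Rightarrow> nat \<Rightarrow> (nat \<Rightarrow> nat) \<Rightarrow> nat \<Rightarrow> nat" where
  "below_height n k \<rho> l = Max (insert 0 {Suc (\<rho> m) | m. m < n + k \<and> \<not> incomp_idx n k m l})"

text \<open>\<open>b\<^sub>l\<close> is placed just above the highest \<open>a\<^sub>m < b\<^sub>l\<close>; the residue modulo \<open>n + k + 1\<close>
  keeps all keys distinct.\<close>
fun ext_key :: "nat \<Rightarrow> nat \<Rightarrow> (nat \<Rightarrow> nat) \<Rightarrow> celem \<Rightarrow> nat" where
  "ext_key n k \<rho> (CA m) = (n + k + 1) * Suc (\<rho> m)"
| "ext_key n k \<rho> (CB l) = Suc l + (n + k + 1) * below_height n k \<rho> l"

lemma finite_below_heights: "finite (insert 0 {Suc (\<rho> m) | m. m < (N :: nat) \<and> P m})"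
  by (rule finite_subset[of _ "insert 0 ((\<lambda>m. Suc (\<rho> m)) ` {..<N})"]) auto

lemma below_height_ge:
  "m < n + k \<Longrightarrow> \<not> incomp_idx n k m l \<Longrightarrow> Suc (\<rho> m) \<le> below_height n k \<rho> l"
  unfolding below_height_def by (rule Max_ge[OF finite_below_heights]) blast

lemma below_height_le:
  "(\<And>m. m < n + k \<Longrightarrow> \<not> incomp_idx n k m l \<Longrightarrow> \<rho> m < c) \<Longrightarrow> below_height n k \<rho> l \<le> c"
  unfolding below_height_def by (subst Max_le_iff[OF finite_below_heights]) (auto simp: Suc_le_eq)

lemma ext_key_mod:
  "ext_key n k \<rho> (CA m) mod (n + k + 1) = 0"
  "l < n + k \<Longrightarrow> ext_key n k \<rho> (CB l) mod (n + k + 1) = Suc l"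
  by (simp_all only: ext_key.simps mod_mult_self1_is_0 mod_mult_self2) simp

lemma inj_on_ext_key:
  assumes "inj_on \<rho> {..<n + k}"
  shows "inj_on (ext_key n k \<rho>) (ground n k)"
proof (rule inj_onI)
  fix a b assume "a \<in> ground n k" "b \<in> ground n k" and eq: "ext_key n k \<rho> a = ext_key n k \<rho> b"
  have eq_mod: "ext_key n k \<rho> a mod (n + k + 1) = ext_key n k \<rho> b mod (n + k + 1)"
    using eq by simp
  from \<open>a \<in> ground n k\<close> \<open>b \<in> ground n k\<close> obtain p q where pq: "p < n + k" "q < n + k"
    and "a = CA p \<and> b = CA q \<or> a = CA p \<and> b = CB q \<or> a = CB p \<and> b = CA q \<or> a = CB p \<and> b = CB q"
    unfolding ground_def by blast
  then consider "a = CA p" "b = CA q" | "a = CA p \<and> b = CB q \<or> a = CB p \<and> b = CA q" | "a = CB p" "b = CB q"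
    by blast
  then show "a = b"
  proof cases
    case 1
    with eq have "\<rho> p = \<rho> q"
      by (simp only: ext_key.simps mult_cancel1) simp
    with 1 pq show ?thesis
      using inj_onD[OF assms] by simp
  next
    case 2
    with eq_mod pq show ?thesis
      by (auto simp only: ext_key_mod)
  next
    case 3
    with eq_mod pq show ?thesis
      by (simp only: ext_key_mod) simp
  qed
qed

lemma reversible_rank_rev:
  assumes inj: "inj_on \<rho> {..<n + k}"
  shows "reversible n k (rank_rev n k \<rho>)"
proof -
  let ?L = "sort_key (ext_key n k \<rho>) (ground_list (n + k))"
  have before_L: "before ?L x y"
    if "x \<in> ground n k" "y \<in> ground n k" "ext_key n k \<rho> x < ext_key n k \<rho> y" for x y
    using before_sort_key[of "ext_key n k \<rho>"] inj_on_ext_key[OF inj] that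
    by (simp add: set_ground_list)
  have lin: "lin_ext n k ?L"
    unfolding lin_ext_def
  proof (intro conjI allI impI)
    show "distinct ?L" "set ?L = ground n k"
      by (simp_all add: distinct_ground_list set_ground_list)
    fix x y assume "crown_less n k x y"
    then obtain i j where ij: "x = CA i" "y = CB j" "i < n + k" "j < n + k" "\<not> incomp_idx n k i j"
      unfolding crown_less_def by blast
    then have "(n + k + 1) * Suc (\<rho> i) \<le> (n + k + 1) * below_height n k \<rho> j"
      using below_height_ge by (intro mult_le_mono2)
    then show "before ?L x y"
      using ij by (intro before_L) (auto simp: ground_def)
  qed
  have rev: "before ?L b a" if ab: "(a, b) \<in> rank_rev n k \<rho>" for a b
  proof -
    obtain p l where pl: "a = CA p" "b = CB l" "p < n + k" "l < n + k"
      "\<And>m. m < n + k \<Longrightarrow> \<rho> p \<le> \<rho> m \<Longrightarrow> incomp_idx n k m l"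
      using ab unfolding rank_rev_def incomp_all_def upset_def by blast
    have "below_height n k \<rho> l \<le> \<rho> p"
      by (rule below_height_le) (use pl(5) in \<open>meson not_le\<close>)
    then have "(n + k + 1) * below_height n k \<rho> l \<le> (n + k + 1) * \<rho> p"
      by (rule mult_le_mono2)
    then show ?thesis
      using pl by (intro before_L) (auto simp: ground_def)
  qed
  have "rank_rev n k \<rho> \<subseteq> Inc n k"
    unfolding rank_rev_def Inc_def incomp_all_def upset_def by auto
  with lin rev show ?thesis
    unfolding reversible_def by (intro conjI exI[of _ ?L]) auto
qed

subsection \<open>Every maximal reversible set comes from a ranking\<close>

definition list_pos :: "'a list \<Rightarrow> 'a \<Rightarrow> nat" where
  "list_pos L x = (THE p. p < length L \<and> L ! p = x)"

lemma list_pos_nth: "distinct L \<Longrightarrow> p < length L \<Longrightarrow> list_pos L (L ! p) = p"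
  unfolding list_pos_def by (rule the_equality) (auto simp: nth_eq_iff_index_eq)

lemma list_pos_inj: "distinct L \<Longrightarrow> x \<in> set L \<Longrightarrow> y \<in> set L \<Longrightarrow> list_pos L x = list_pos L y \<Longrightarrow> x = y"
  by (metis in_set_conv_nth list_pos_nth)

lemma before_list_pos: "distinct L \<Longrightarrow> before L x y \<Longrightarrow> list_pos L x < list_pos L y"
  unfolding before_def by (auto simp: list_pos_nth)

lemma max_reversible_rank_rev:
  assumes "max_reversible n k R"
  obtains \<rho> where "inj_on \<rho> {..<n + k}" "R = rank_rev n k \<rho>"
proof -
  obtain L where L: "lin_ext n k L" "R \<subseteq> Inc n k" "\<forall>(a, b)\<in>R. before L b a"
    using assms unfolding max_reversible_def reversible_def by blast
  have dist: "distinct L" and set_L: "set L = ground n k"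
    using L(1) unfolding lin_ext_def by auto
  define \<rho> where "\<rho> m = list_pos L (CA m)" for m
  have inj: "inj_on \<rho> {..<n + k}"
  proof (rule inj_onI)
    fix p q assume "p \<in> {..<n + k}" "q \<in> {..<n + k}" "\<rho> p = \<rho> q"
    then have "CA p = CA q"
      using list_pos_inj[OF dist, of "CA p" "CA q"] set_L unfolding \<rho>_def ground_def by blast
    then show "p = q" by simp
  qed
  have "R \<subseteq> rank_rev n k \<rho>"
  proof
    fix z assume z: "z \<in> R"
    then obtain p l where pl: "z = (CA p, CB l)" "p < n + k" "l < n + k"
      using L(2) unfolding Inc_def by auto
    have b_before_a: "list_pos L (CB l) < \<rho> p"
      using L(3) z pl(1) before_list_pos[OF dist] unfolding \<rho>_def by auto
    have "incomp_idx n k m l" if "m < n + k" "\<rho> p \<le> \<rho> m" for m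
    proof (rule ccontr)
      assume "\<not> incomp_idx n k m l"
      then have "before L (CA m) (CB l)"
        using L(1) that(1) pl(3) unfolding lin_ext_def crown_less_def by blast
      then have "\<rho> m < list_pos L (CB l)"
        using before_list_pos[OF dist] unfolding \<rho>_def by blast
      with b_before_a that(2) show False by simp
    qed
    then show "z \<in> rank_rev n k \<rho>"
      using pl by (auto simp: rank_rev_iff incomp_all_def upset_def)
  qed
  then have "R = rank_rev n k \<rho>"
    using assms reversible_rank_rev[OF inj] unfolding max_reversible_def by blast
  with inj that show ?thesis by blast
qed

definition above_count :: "nat \<Rightarrow> (nat \<Rightarrow> nat) \<Rightarrow> nat \<Rightarrow> nat" where
  "above_count N \<rho> m = card {m'. m' < N \<and> \<rho> m < \<rho> m'}"

definition topmost :: "nat \<Rightarrow> (nat \<Rightarrow> nat) \<Rightarrow> nat \<Rightarrow> nat set" where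
  "topmost N \<rho> j = {m. m < N \<and> above_count N \<rho> m < j}"

text \<open>Counted from \<open>0\<close>: \<open>topmost_elem N \<rho> 0\<close> is the top element.\<close>
definition topmost_elem :: "nat \<Rightarrow> (nat \<Rightarrow> nat) \<Rightarrow> nat \<Rightarrow> nat" where
  "topmost_elem N \<rho> = inv_into {..<N} (above_count N \<rho>)"

lemma above_count_less:
  assumes "m < N" "m' < N" "\<rho> m < \<rho> m'"
  shows "above_count N \<rho> m' < above_count N \<rho> m"
  unfolding above_count_def using assms by (intro psubset_card_mono) auto

lemma above_count_le_iff:
  assumes "inj_on \<rho> {..<N}" "m < N" "m' < N"
  shows "above_count N \<rho> m \<le> above_count N \<rho> m' \<longleftrightarrow> \<rho> m' \<le> \<rho> m"
  using above_count_less[of m N m' \<rho>] above_count_less[of m' N m \<rho>] inj_onD[OF assms(1), of m m'] assms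
  by (cases "\<rho> m = \<rho> m'") (auto simp: not_le[symmetric])

lemma bij_betw_above_count:
  assumes "inj_on \<rho> {..<N}"
  shows "bij_betw (above_count N \<rho>) {..<N} {..<N}"
proof -
  have inj: "inj_on (above_count N \<rho>) {..<N}"
  proof (rule inj_onI)
    fix m m' assume m: "m \<in> {..<N}" "m' \<in> {..<N}" "above_count N \<rho> m = above_count N \<rho> m'"
    then have "\<rho> m = \<rho> m'"
      using above_count_le_iff[OF assms, of m m'] above_count_le_iff[OF assms, of m' m] by simp
    with m show "m = m'" using inj_onD[OF assms] by blast
  qed
  have "above_count N \<rho> m < N" if "m < N" for m
  proof -
    have "above_count N \<rho> m \<le> card ({..<N} - {m})"
      unfolding above_count_def by (intro card_mono) auto
    then show ?thesis using that by simp
  qed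
  then have "above_count N \<rho> ` {..<N} \<subseteq> {..<N}" by auto
  with inj show ?thesis
    unfolding bij_betw_def by (simp add: card_image card_subset_eq)
qed

lemma bij_betw_topmost_elem:
  "inj_on \<rho> {..<N} \<Longrightarrow> bij_betw (topmost_elem N \<rho>) {..<N} {..<N}"
  unfolding topmost_elem_def by (rule bij_betw_inv_into[OF bij_betw_above_count])

lemma topmost_elem_lt: "inj_on \<rho> {..<N} \<Longrightarrow> j < N \<Longrightarrow> topmost_elem N \<rho> j < N"
  using bij_betw_topmost_elem bij_betwE by blast

lemma above_count_topmost_elem:
  "inj_on \<rho> {..<N} \<Longrightarrow> j < N \<Longrightarrow> above_count N \<rho> (topmost_elem N \<rho> j) = j"
  unfolding topmost_elem_def using bij_betw_above_count bij_betw_inv_into_right by fastforce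

lemma topmost_elem_above_count:
  "inj_on \<rho> {..<N} \<Longrightarrow> m < N \<Longrightarrow> topmost_elem N \<rho> (above_count N \<rho> m) = m"
  unfolding topmost_elem_def using bij_betw_above_count bij_betw_inv_into_left by fastforce

lemma topmost_eq_image:
  assumes "inj_on \<rho> {..<N}" "j \<le> N"
  shows "topmost N \<rho> j = topmost_elem N \<rho> ` {..<j}"
proof -
  have "topmost N \<rho> j = {m. m < N \<and> above_count N \<rho> m < j}"
    unfolding topmost_def ..
  also have "\<dots> = topmost_elem N \<rho> ` {..<j}"
    using assms above_count_topmost_elem[OF assms(1)] topmost_elem_above_count[OF assms(1)]
      topmost_elem_lt[OF assms(1)]
    by (auto simp: image_iff) (metis lessThan_iff order_less_le_trans)
  finally show ?thesis .
qed

lemma topmost_mono: "j \<le> j' \<Longrightarrow> topmost N \<rho> j \<subseteq> topmost N \<rho> j'"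
  unfolding topmost_def by auto

lemma topmost_Suc:
  assumes "inj_on \<rho> {..<N}" "j < N"
  shows "topmost N \<rho> (Suc j) = insert (topmost_elem N \<rho> j) (topmost N \<rho> j)"
    and "topmost_elem N \<rho> j \<notin> topmost N \<rho> j"
  using topmost_eq_image[OF assms(1), of "Suc j"] topmost_eq_image[OF assms(1), of j] assms
    above_count_topmost_elem[OF assms]
  by (auto simp: lessThan_Suc topmost_def)

lemma upset_eq_topmost:
  assumes "inj_on \<rho> {..<N}" "p < N"
  shows "upset N \<rho> p = topmost N \<rho> (Suc (above_count N \<rho> p))"
  unfolding upset_def topmost_def using above_count_le_iff[OF assms(1) _ assms(2)]
  by (auto simp: less_Suc_eq_le)

lemma Bof_topmost_elem:
  assumes "inj_on \<rho> {..<n + k}" "j < n + k"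
  shows "Bof (CA (topmost_elem (n + k) \<rho> j)) (rank_rev n k \<rho>)
    = CB ` incomp_all n k (topmost (n + k) \<rho> (Suc j))"
  using Bof_rank_rev[OF topmost_elem_lt[OF assms]] upset_eq_topmost[OF assms(1) topmost_elem_lt[OF assms]]
    above_count_topmost_elem[OF assms] by simp

lemma AofR_rank_rev:
  assumes "inj_on \<rho> {..<n + k}"
  shows "AofR (rank_rev n k \<rho>) = (\<lambda>j. CA (topmost_elem (n + k) \<rho> j)) `
    {j. j < n + k \<and> incomp_all n k (topmost (n + k) \<rho> (Suc j)) \<noteq> {}}"
    (is "_ = ?f ` ?Z")
proof
  show "AofR (rank_rev n k \<rho>) \<subseteq> ?f ` ?Z"
  proof
    fix z assume "z \<in> AofR (rank_rev n k \<rho>)"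
    then obtain p where p: "z = CA p" "p < n + k" "incomp_all n k (upset (n + k) \<rho> p) \<noteq> {}"
      unfolding AofR_def Bof_def rank_rev_def by blast
    then show "z \<in> ?f ` ?Z"
      using above_count_topmost_elem[OF assms] topmost_elem_above_count[OF assms p(2)]
        bij_betwE[OF bij_betw_above_count[OF assms]] upset_eq_topmost[OF assms p(2)]
      by (intro image_eqI[of _ _ "above_count (n + k) \<rho> p"]) auto
  qed
  show "?f ` ?Z \<subseteq> AofR (rank_rev n k \<rho>)"
    using Bof_topmost_elem[OF assms] unfolding AofR_def by auto
qed

lemma inj_on_CA_topmost_elem:
  "inj_on \<rho> {..<N} \<Longrightarrow> inj_on (\<lambda>j. CA (topmost_elem N \<rho> j)) {..<N}"
  using bij_betw_imp_inj_on[OF bij_betw_topmost_elem] unfolding inj_on_def by simp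

lemma down_closed_eq_lessThan_card:
  fixes Z :: "nat set"
  assumes "finite Z" and down: "\<And>a b. a \<in> Z \<Longrightarrow> b \<le> a \<Longrightarrow> b \<in> Z"
  shows "Z = {..<card Z}"
proof -
  have "a < card Z" if "a \<in> Z" for a
  proof -
    have "{..a} \<subseteq> Z" using down[OF that] by auto
    then have "card {..a} \<le> card Z" by (rule card_mono[OF assms(1)])
    then show ?thesis by simp
  qed
  then have "Z \<subseteq> {..<card Z}" by auto
  then show ?thesis by (intro card_subset_eq) auto
qed

lemma nonempty_incomp_topmost:
  assumes inj: "inj_on \<rho> {..<n + k}" and card_A: "card (AofR (rank_rev n k \<rho>)) = k + 1"
  shows "{j. j < n + k \<and> incomp_all n k (topmost (n + k) \<rho> (Suc j)) \<noteq> {}} = {..<k + 1}"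
    (is "?Z = _")
proof -
  have "inj_on (\<lambda>j. CA (topmost_elem (n + k) \<rho> j)) ?Z"
    by (rule inj_on_subset[OF inj_on_CA_topmost_elem[OF inj]]) auto
  then have "card ?Z = k + 1"
    using card_A by (simp add: AofR_rank_rev[OF inj] card_image)
  moreover have "?Z = {..<card ?Z}"
  proof (rule down_closed_eq_lessThan_card)
    fix a b assume "a \<in> ?Z" "b \<le> a"
    moreover have "incomp_all n k (topmost (n + k) \<rho> (Suc a)) \<subseteq> incomp_all n k (topmost (n + k) \<rho> (Suc b))"
      using \<open>b \<le> a\<close> by (intro incomp_all_antimono topmost_mono) simp
    ultimately show "b \<in> ?Z" by auto
  qed simp
  ultimately show ?thesis by simp
qed

lemma antitone_enumeration_le:
  fixes F :: "'a \<Rightarrow> nat" and K a :: nat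
  assumes u: "bij_betw u {1..K} S" and v: "bij_betw v {1..K} S"
    and u_anti: "\<And>a b. 1 \<le> a \<Longrightarrow> a \<le> b \<Longrightarrow> b \<le> K \<Longrightarrow> F (u b) \<le> F (u a)"
    and v_anti: "\<And>a b. 1 \<le> a \<Longrightarrow> a \<le> b \<Longrightarrow> b \<le> K \<Longrightarrow> F (v b) \<le> F (v a)"
    and a: "1 \<le> a" "a \<le> K"
  shows "F (v a) \<le> F (u a)"
proof -
  let ?u' = "inv_into {1..K} u"
  let ?B = "(?u' \<circ> v) ` {1..a}"
  have g: "bij_betw (?u' \<circ> v) {1..K} {1..K}"
    using bij_betw_trans[OF v bij_betw_inv_into[OF u]] .
  have sub: "{1..a} \<subseteq> {1..K}" using a by auto
  have "?B \<subseteq> (?u' \<circ> v) ` {1..K}" by (rule image_mono[OF sub])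
  also have "\<dots> = {1..K}" using g by (simp add: bij_betw_def)
  finally have B_sub: "?B \<subseteq> {1..K}" .
  have card_B: "card ?B = a"
    using card_image[OF inj_on_subset[OF bij_betw_imp_inj_on[OF g] sub]] by simp
  \<comment> \<open>Pigeonhole: one of \<open>v 1, \<dots>, v a\<close> has \<open>u\<close>-position at least \<open>a\<close>.\<close>
  have "\<not> ?B \<subseteq> {1..<a}"
    using card_mono[of "{1..<a}" ?B] card_B a by auto
  then obtain b where "b \<in> ?B" "a \<le> b"
    using B_sub by fastforce
  then obtain c where c: "c \<in> {1..a}" "b = ?u' (v c)" by auto
  have "v c \<in> S" using c a v by (auto dest: bij_betwE)
  then have "u b = v c" using c u by (simp add: bij_betw_inv_into_right)
  moreover have "b \<le> K" using \<open>b \<in> ?B\<close> B_sub by auto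
  ultimately show ?thesis
    using u_anti[OF a(1) \<open>a \<le> b\<close>] v_anti[of c a] c a by auto
qed

lemma antitone_enumerations_agree:
  fixes F :: "'a \<Rightarrow> nat" and K a :: nat
  assumes "bij_betw u {1..K} S" "bij_betw v {1..K} S"
    and "\<And>a b. 1 \<le> a \<Longrightarrow> a \<le> b \<Longrightarrow> b \<le> K \<Longrightarrow> F (u b) \<le> F (u a)"
    and "\<And>a b. 1 \<le> a \<Longrightarrow> a \<le> b \<Longrightarrow> b \<le> K \<Longrightarrow> F (v b) \<le> F (v a)"
    and "1 \<le> a" "a \<le> K"
  shows "F (u a) = F (v a)"
  using antitone_enumeration_le[OF assms] antitone_enumeration_le[OF assms(2,1,4,3,5,6)] by simp

lemma finite_Bof_rank_rev: "finite (Bof z (rank_rev n k \<rho>))"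
proof (rule finite_subset)
  show "Bof z (rank_rev n k \<rho>) \<subseteq> CB ` {..<n + k}"
    unfolding Bof_def rank_rev_def incomp_all_def by auto
qed simp

lemma bij_betw_topmost_labeling:
  assumes inj: "inj_on \<rho> {..<n + k}" and n: "n \<ge> 1"
    and nonempty: "{j. j < n + k \<and> incomp_all n k (topmost (n + k) \<rho> (Suc j)) \<noteq> {}} = {..<k + 1}"
  shows "bij_betw (\<lambda>a. CA (topmost_elem (n + k) \<rho> (a - 1))) {1..k+1} (AofR (rank_rev n k \<rho>))"
proof -
  let ?v = "\<lambda>a. CA (topmost_elem (n + k) \<rho> (a - 1))"
  have "?v ` {1..k+1} = (\<lambda>j. CA (topmost_elem (n + k) \<rho> j)) ` {..<k + 1}"
    by (force simp: image_iff Suc_le_eq)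
  moreover have "inj_on ?v {1..k+1}"
  proof (rule inj_onI)
    fix a b assume ab: "a \<in> {1..k+1}" "b \<in> {1..k+1}" "?v a = ?v b"
    moreover have "a - 1 < n + k" "b - 1 < n + k" using ab n by auto
    ultimately have "a - 1 = b - 1"
      using inj_onD[OF inj_on_CA_topmost_elem[OF inj], of "a - 1" "b - 1"] by simp
    with ab show "a = b" by auto
  qed
  ultimately show ?thesis
    unfolding bij_betw_def using AofR_rank_rev[OF inj] nonempty by simp
qed

lemma consistent_labeling_rank_rev:
  assumes inj: "inj_on \<rho> {..<n + k}" and n: "n \<ge> 1"
    and cl: "consistent_labeling k (rank_rev n k \<rho>) x"
  shows "{j. j < n + k \<and> incomp_all n k (topmost (n + k) \<rho> (Suc j)) \<noteq> {}} = {..<k + 1}"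
    and "\<And>a. 1 \<le> a \<Longrightarrow> a \<le> k + 1 \<Longrightarrow>
      card (Bof (x a) (rank_rev n k \<rho>)) = card (incomp_all n k (topmost (n + k) \<rho> a))"
proof -
  let ?R = "rank_rev n k \<rho>"
  let ?v = "\<lambda>a. CA (topmost_elem (n + k) \<rho> (a - 1))"
  let ?F = "\<lambda>z. card (Bof z ?R)"
  have x: "bij_betw x {1..k+1} (AofR ?R)"
    using cl unfolding consistent_labeling_def by blast
  show nonempty: "{j. j < n + k \<and> incomp_all n k (topmost (n + k) \<rho> (Suc j)) \<noteq> {}} = {..<k + 1}"
    using nonempty_incomp_topmost[OF inj] bij_betw_same_card[OF x] by simp
  have F_v: "?F (?v a) = card (incomp_all n k (topmost (n + k) \<rho> a))" if "1 \<le> a" "a \<le> k + 1" for a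
    using Bof_topmost_elem[OF inj, of "a - 1"] that n by simp
  have x_anti: "?F (x b) \<le> ?F (x a)" if "1 \<le> a" "a \<le> b" "b \<le> k + 1" for a b
  proof (cases "a = b")
    case False
    with cl that have "Bof (x b) ?R \<subseteq> Bof (x a) ?R"
      unfolding consistent_labeling_def by auto
    then show ?thesis by (rule card_mono[OF finite_Bof_rank_rev])
  qed simp
  have v_anti: "?F (?v b) \<le> ?F (?v a)" if "1 \<le> a" "a \<le> b" "b \<le> k + 1" for a b
    using that F_v[of a] F_v[of b]
    by (simp add: card_mono incomp_all_antimono topmost_mono)
  fix a assume "1 \<le> a" "a \<le> k + 1"
  then show "?F (x a) = card (incomp_all n k (topmost (n + k) \<rho> a))"
    using antitone_enumerations_agree[OF x bij_betw_topmost_labeling[OF inj n nonempty] x_anti v_anti] F_v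
    by simp
qed

subsection \<open>Rotations of the crown\<close>

text \<open>\<open>rot N s ` {..<m}\<close> is the block of \<open>m\<close> cyclically consecutive indices starting at \<open>s\<close>.\<close>
definition rot :: "nat \<Rightarrow> nat \<Rightarrow> nat \<Rightarrow> nat" where
  "rot N s e = (s + e) mod N"

lemma int_cyclic_diff: "a < N \<Longrightarrow> int ((b + N - a) mod N) = (int b - int a) mod int N"
proof -
  assume "a < N"
  then have "int ((b + N - a) mod N) = ((int b - int a) + int N) mod int N"
    by (simp add: zmod_int of_nat_diff algebra_simps)
  then show ?thesis by simp
qed

lemma rot_cyclic_diff:
  assumes "a < N" "b < N"
  shows "(rot N s b + N - rot N s a) mod N = (b + N - a) mod N"
proof -
  have "int ((rot N s b + N - rot N s a) mod N) = (int ((s + b) mod N) - int ((s + a) mod N)) mod int N"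
    unfolding rot_def using assms by (intro int_cyclic_diff) simp
  also have "\<dots> = (int (s + b) - int (s + a)) mod int N"
    by (simp add: zmod_int mod_diff_eq)
  also have "\<dots> = int ((b + N - a) mod N)"
    using int_cyclic_diff[OF assms(1)] by simp
  finally show ?thesis by simp
qed

lemma incomp_idx_rot:
  "e < n + k \<Longrightarrow> f < n + k \<Longrightarrow>
    incomp_idx n k (rot (n + k) s e) (rot (n + k) s f) \<longleftrightarrow> incomp_idx n k e f"
  unfolding incomp_idx_def by (simp add: rot_cyclic_diff)

lemma cyclic_diff_eq:
  fixes a b N :: nat
  assumes "a < N" "b < N"
  shows "(b + N - a) mod N = (if a \<le> b then b - a else b + N - a)"
proof (cases "a \<le> b")
  case True
  then have "(b + N - a) mod N = (b - a + N) mod N" by simp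
  also have "\<dots> = (b - a) mod N" by (rule mod_add_self2)
  finally show ?thesis using True assms by simp
qed (use assms in simp)

lemma incomp_idx_iff:
  assumes "e < n + k" "f < n + k"
  shows "incomp_idx n k e f \<longleftrightarrow> e \<le> f \<and> f \<le> e + k \<or> f + n \<le> e"
  using cyclic_diff_eq[OF assms] unfolding incomp_idx_def by auto

lemma rot_lt: "0 < N \<Longrightarrow> rot N s e < N"
  unfolding rot_def by simp

lemma inj_on_rot: "inj_on (rot N s) {..<N}"
proof (rule inj_onI)
  fix a b assume "a \<in> {..<N}" "b \<in> {..<N}" "rot N s a = rot N s b"
  then show "a = b"
    using rot_cyclic_diff[of a N b s] cyclic_diff_eq[of a N b] by (auto split: if_splits)
qed

lemma rot_image: "0 < N \<Longrightarrow> rot N s ` {..<N} = {..<N}"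
  using rot_lt card_image[OF inj_on_rot] by (intro card_subset_eq) auto

lemma rot_surj:
  assumes "0 < N" "x < N"
  obtains e where "e < N" "rot N s e = x"
  using rot_image[OF assms(1), of s] assms(2) by (metis imageE lessThan_iff)

lemma incomp_all_rot:
  assumes "E \<subseteq> {..<n + k}" "0 < n + k"
  shows "incomp_all n k (rot (n + k) s ` E) = rot (n + k) s ` incomp_all n k E"
proof -
  have "rot (n + k) s ` incomp_all n k E = {l \<in> rot (n + k) s ` {..<n + k}. \<forall>e\<in>E. incomp_idx n k (rot (n + k) s e) l}"
    unfolding incomp_all_def using assms(1) incomp_idx_rot by (auto simp: image_iff subset_iff)
  then show ?thesis
    unfolding incomp_all_def rot_image[OF assms(2)] by auto
qed

lemma card_incomp_all_rot:
  assumes "E \<subseteq> {..<n + k}" "0 < n + k"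
  shows "card (incomp_all n k (rot (n + k) s ` E)) = card (incomp_all n k E)"
  using incomp_all_rot[OF assms] card_image[OF inj_on_subset[OF inj_on_rot]]
  by (simp add: incomp_all_def subset_iff)

lemma incomp_all_lessThan:
  assumes "1 \<le> m" "m \<le> n + k" "2 \<le> n"
  shows "incomp_all n k {..<m} = {m - 1..k}"
proof
  show "incomp_all n k {..<m} \<subseteq> {m - 1..k}"
  proof
    fix f assume "f \<in> incomp_all n k {..<m}"
    then have f: "f < n + k" "\<And>e. e < m \<Longrightarrow> incomp_idx n k e f"
      unfolding incomp_all_def by auto
    have "f \<le> k" using f(2)[of 0] assms incomp_idx_iff[OF _ f(1), of 0] by simp
    moreover have "m - 1 \<le> f"
    proof (rule ccontr)
      assume "\<not> m - 1 \<le> f"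
      then have "Suc f < m" by simp
      then show False
        using f(2)[of "Suc f"] incomp_idx_iff[of "Suc f" n k f] f(1) assms by simp
    qed
    ultimately show "f \<in> {m - 1..k}" by simp
  qed
  show "{m - 1..k} \<subseteq> incomp_all n k {..<m}"
    unfolding incomp_all_def using assms by (auto simp: incomp_idx_iff)
qed

lemma card_incomp_all_lessThan:
  "1 \<le> m \<Longrightarrow> m \<le> k + 1 \<Longrightarrow> 2 \<le> n \<Longrightarrow> card (incomp_all n k {..<m}) = k + 2 - m"
  by (simp add: incomp_all_lessThan)

lemma incomp_all_insert_lessThan:
  assumes "1 \<le> m" "m \<le> e" "e < n + k" "2 \<le> n"
  shows "incomp_all n k (insert e {..<m}) = {f. m - 1 \<le> f \<and> f \<le> k \<and> (e \<le> f \<or> f + n \<le> e)}"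
proof -
  have "incomp_all n k (insert e {..<m}) = incomp_all n k {..<m} \<inter> {f. incomp_idx n k e f}"
    unfolding incomp_all_def by auto
  also have "\<dots> = {f. m - 1 \<le> f \<and> f \<le> k \<and> (e \<le> f \<or> f + n \<le> e)}"
    using assms by (auto simp: incomp_all_lessThan incomp_idx_iff)
  finally show ?thesis .
qed

lemma card_incomp_all_insert_gap:
  assumes "3 \<le> n" "1 \<le> m" "m \<le> k" "m < e" "e + 1 < n + k"
  shows "card (incomp_all n k (insert e {..<m})) < k + 1 - m"
proof -
  let ?S = "{f. m - 1 \<le> f \<and> f \<le> k \<and> (e \<le> f \<or> f + n \<le> e)}"
  obtain f1 f2 where f12: "f1 \<noteq> f2" "f1 \<in> {m - 1..k} - ?S" "f2 \<in> {m - 1..k} - ?S"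
  proof (cases "e \<le> k + 1")
    case True
    show ?thesis by (rule that[of "e - 1" "e - 2"]) (use True assms in auto)
  next
    case False
    show ?thesis by (rule that[of k "k - 1"]) (use False assms in auto)
  qed
  have "?S \<subseteq> {m - 1..k} - {f1, f2}" using f12 by auto
  then have "card ?S \<le> card {m - 1..k} - 2"
    using card_mono[of "{m - 1..k} - {f1, f2}" ?S] f12 by (simp add: card_Diff_subset)
  then show ?thesis
    using incomp_all_insert_lessThan[of m e n k] assms by simp
qed

lemma rot_insert_last:
  assumes "0 < N"
  shows "rot N s ` insert (N - 1) {..<m} = rot N (rot N s (N - 1)) ` {..<Suc m}"
proof -
  have "rot N (rot N s (N - 1)) (Suc t) = rot N s t" for t
  proof -
    have "rot N (rot N s (N - 1)) (Suc t) = ((s + (N - 1)) mod N + Suc t) mod N"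
      unfolding rot_def ..
    also have "\<dots> = (s + (N - 1) + Suc t) mod N"
      by (rule mod_add_left_eq)
    also have "s + (N - 1) + Suc t = (s + t) + N" using assms by simp
    finally show ?thesis unfolding rot_def by simp
  qed
  moreover have "rot N (rot N s (N - 1)) 0 = rot N s (N - 1)"
    unfolding rot_def by simp
  ultimately show ?thesis
    by (simp add: lessThan_Suc_eq_insert_0 image_image)
qed

lemma rot_block_insert:
  assumes "3 \<le> n" "1 \<le> m" "m \<le> k" "s < n + k" "m \<le> e" "e < n + k"
    and "card (incomp_all n k (insert e {..<m})) = k + 1 - m"
  shows "\<exists>s'<n + k. rot (n + k) s ` insert e {..<m} = rot (n + k) s' ` {..<Suc m}"
proof -
  have "e = m \<or> e = n + k - 1"
    using card_incomp_all_insert_gap[of n m k e] assms by fastforce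
  then show ?thesis
  proof
    assume "e = m"
    then show ?thesis using assms(4) by (auto simp: lessThan_Suc)
  next
    assume "e = n + k - 1"
    then show ?thesis
      using rot_insert_last[of "n + k" s m] rot_lt[of "n + k"] assms(1) by auto
  qed
qed

subsection \<open>Top segments without defect are blocks\<close>

lemma topmost_one:
  assumes inj: "inj_on \<rho> {..<N}" and N: "0 < N"
  shows "topmost N \<rho> 1 = rot N (topmost_elem N \<rho> 0) ` {..<1}"
  using topmost_eq_image[OF inj, of 1] topmost_elem_lt[OF inj N] N by (simp add: rot_def lessThan_Suc)

lemma topmost_Suc_rot:
  assumes inj: "inj_on \<rho> {..<N}" and j: "j < N" and top: "topmost N \<rho> j = rot N s ` E"
  obtains e where "e < N" "e \<notin> E" "topmost N \<rho> (Suc j) = rot N s ` insert e E"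
proof -
  obtain e where e: "e < N" "rot N s e = topmost_elem N \<rho> j"
    using rot_surj[of N "topmost_elem N \<rho> j" s] topmost_elem_lt[OF inj j] j by auto
  have "rot N s e \<notin> rot N s ` E"
    using topmost_Suc(2)[OF inj j] top e(2) by simp
  then have "e \<notin> E" by blast
  moreover have "topmost N \<rho> (Suc j) = rot N s ` insert e E"
    using topmost_Suc(1)[OF inj j] top e(2) by simp
  ultimately show ?thesis using that e(1) by blast
qed

lemma topmost_block:
  assumes n: "3 \<le> n" and inj: "inj_on \<rho> {..<n + k}"
  shows "1 \<le> j \<Longrightarrow> j \<le> k + 1 \<Longrightarrow>
    (\<And>j'. 2 \<le> j' \<Longrightarrow> j' \<le> j \<Longrightarrow> card (incomp_all n k (topmost (n + k) \<rho> j')) = k + 2 - j') \<Longrightarrow>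
    \<exists>s<n + k. topmost (n + k) \<rho> j = rot (n + k) s ` {..<j}"
proof (induction j)
  case 0
  then show ?case by simp
next
  case (Suc j)
  let ?N = "n + k"
  have N: "0 < ?N" using n by simp
  show ?case
  proof (cases "j = 0")
    case True
    then show ?thesis
      using topmost_one[OF inj N] topmost_elem_lt[OF inj N] by auto
  next
    case False
    with Suc obtain s where s: "s < ?N" "topmost ?N \<rho> j = rot ?N s ` {..<j}" by auto
    have j: "j < ?N" using Suc.prems n by simp
    obtain e where e: "e < ?N" "j \<le> e" "topmost ?N \<rho> (Suc j) = rot ?N s ` insert e {..<j}"
      using topmost_Suc_rot[OF inj j s(2)] by (metis lessThan_iff not_le)
    moreover have "card (incomp_all n k (insert e {..<j})) = k + 1 - j"
      using card_incomp_all_rot[of "insert e {..<j}" n k s] e j N Suc.prems(3)[of "Suc j"] False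
      by simp
    ultimately show ?thesis
      using rot_block_insert[OF n _ _ s(1)] False Suc.prems by simp
  qed
qed

subsection \<open>Rankings whose top segments are all blocks give canonical sets\<close>

definition topmost_list :: "nat \<Rightarrow> (nat \<Rightarrow> nat) \<Rightarrow> nat \<Rightarrow> celem list" where
  "topmost_list N \<rho> K = map (\<lambda>j. CA (topmost_elem N \<rho> j)) [0..<K]"

lemma length_topmost_list [simp]: "length (topmost_list N \<rho> K) = K"
  by (simp add: topmost_list_def)

lemma nth_topmost_list [simp]: "j < K \<Longrightarrow> topmost_list N \<rho> K ! j = CA (topmost_elem N \<rho> j)"
  by (simp add: topmost_list_def)

lemma set_take_topmost_list:
  assumes "inj_on \<rho> {..<N}" "j \<le> K" "K \<le> N"
  shows "set (take j (topmost_list N \<rho> K)) = CA ` topmost N \<rho> j"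
proof -
  have "take j [0..<K] = [0..<j]"
    using assms(2) by (simp add: take_upt)
  then show ?thesis
    unfolding topmost_list_def using topmost_eq_image[OF assms(1)] assms(2,3)
    by (simp add: take_map image_image atLeast0LessThan)
qed

lemma h_contiguous_topmost_list:
  assumes inj: "inj_on \<rho> {..<n + k}" and K: "K \<le> n + k"
    and blocks: "\<And>j. 1 \<le> j \<Longrightarrow> j \<le> K \<Longrightarrow> \<exists>s<n + k. topmost (n + k) \<rho> j = rot (n + k) s ` {..<j}"
  shows "h_contiguous n k (topmost_list (n + k) \<rho> K)"
  unfolding h_contiguous_def
proof (intro conjI allI impI)
  show "distinct (topmost_list (n + k) \<rho> K)"
    unfolding topmost_list_def distinct_map
    using inj_on_subset[OF inj_on_CA_topmost_elem[OF inj], of "{..<K}"] K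
    by (auto simp: atLeast0LessThan)
  show "set (topmost_list (n + k) \<rho> K) \<subseteq> Aset n k"
    unfolding topmost_list_def Aset_def using topmost_elem_lt[OF inj] K by auto
  fix j assume "1 \<le> j \<and> j \<le> length (topmost_list (n + k) \<rho> K)"
  then have j: "1 \<le> j" "j \<le> K" by auto
  then obtain s where "s < n + k" "topmost (n + k) \<rho> j = rot (n + k) s ` {..<j}"
    using blocks by blast
  moreover have "set (take j (topmost_list (n + k) \<rho> K)) = CA ` topmost (n + k) \<rho> j"
    using set_take_topmost_list[OF inj j(2) K] .
  ultimately show "contiguous n k (set (take j (topmost_list (n + k) \<rho> K)))"
    unfolding contiguous_def rot_def using j K by (intro exI[of _ s] exI[of _ j]) auto
qed

lemma Tlev_eq: "Tlev n k \<sigma> j = {b. \<forall>t\<le>j. (\<sigma> ! t, b) \<in> Inc n k}"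
  by (induction j) (auto simp: le_Suc_eq)

lemma Tlev_topmost_list:
  assumes inj: "inj_on \<rho> {..<n + k}" and "j < K" "K \<le> n + k"
  shows "Tlev n k (topmost_list (n + k) \<rho> K) j = CB ` incomp_all n k (topmost (n + k) \<rho> (Suc j))"
proof -
  have nth: "topmost_list (n + k) \<rho> K ! t = CA (topmost_elem (n + k) \<rho> t)" if "t \<le> j" for t
    using that assms(2) by simp
  have top: "topmost (n + k) \<rho> (Suc j) = topmost_elem (n + k) \<rho> ` {..j}"
    using topmost_eq_image[OF inj, of "Suc j"] assms(2,3) by (simp add: lessThan_Suc_atMost)
  show ?thesis
    unfolding Tlev_eq top
  proof (intro equalityI subsetI)
    fix b assume "b \<in> {b. \<forall>t\<le>j. (topmost_list (n + k) \<rho> K ! t, b) \<in> Inc n k}"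
    then have b: "(CA (topmost_elem (n + k) \<rho> t), b) \<in> Inc n k" if "t \<le> j" for t
      using that nth by simp
    then obtain l where "b = CB l" "l < n + k"
      using b[of 0] unfolding Inc_def by auto
    with b show "b \<in> CB ` incomp_all n k (topmost_elem (n + k) \<rho> ` {..j})"
      unfolding Inc_def incomp_all_def by auto
  next
    fix b assume "b \<in> CB ` incomp_all n k (topmost_elem (n + k) \<rho> ` {..j})"
    then show "b \<in> {b. \<forall>t\<le>j. (topmost_list (n + k) \<rho> K ! t, b) \<in> Inc n k}"
      using nth topmost_elem_lt[OF inj] assms(2,3) unfolding Inc_def incomp_all_def by fastforce
  qed
qed

lemma rank_rev_topmost_elem:
  assumes inj: "inj_on \<rho> {..<n + k}"
  shows "rank_rev n k \<rho> = (\<Union>j<n + k.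
    (\<lambda>l. (CA (topmost_elem (n + k) \<rho> j), CB l)) ` incomp_all n k (topmost (n + k) \<rho> (Suc j)))"
proof (intro equalityI subsetI)
  fix z assume "z \<in> rank_rev n k \<rho>"
  then obtain p l where pl: "z = (CA p, CB l)" "p < n + k" "l \<in> incomp_all n k (upset (n + k) \<rho> p)"
    unfolding rank_rev_def by blast
  define j where "j = above_count (n + k) \<rho> p"
  have "j < n + k"
    unfolding j_def using bij_betwE[OF bij_betw_above_count[OF inj]] pl(2) by blast
  moreover have "z = (CA (topmost_elem (n + k) \<rho> j), CB l)"
    unfolding j_def using topmost_elem_above_count[OF inj pl(2)] pl(1) by simp
  moreover have "l \<in> incomp_all n k (topmost (n + k) \<rho> (Suc j))"
    unfolding j_def using upset_eq_topmost[OF inj pl(2)] pl(3) by simp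
  ultimately show "z \<in> (\<Union>j<n + k.
    (\<lambda>l. (CA (topmost_elem (n + k) \<rho> j), CB l)) ` incomp_all n k (topmost (n + k) \<rho> (Suc j)))"
    by blast
next
  fix z assume "z \<in> (\<Union>j<n + k.
    (\<lambda>l. (CA (topmost_elem (n + k) \<rho> j), CB l)) ` incomp_all n k (topmost (n + k) \<rho> (Suc j)))"
  then obtain j l where "z = (CA (topmost_elem (n + k) \<rho> j), CB l)" "j < n + k"
    "l \<in> incomp_all n k (topmost (n + k) \<rho> (Suc j))"
    by blast
  then show "z \<in> rank_rev n k \<rho>"
    using upset_eq_topmost[OF inj topmost_elem_lt[OF inj]] above_count_topmost_elem[OF inj]
      topmost_elem_lt[OF inj] by (simp add: rank_rev_iff)
qed

lemma Tset_eq_UN: "Tset n k \<sigma> = (\<Union>i<length \<sigma>. (\<lambda>b. (\<sigma> ! i, b)) ` Tlev n k \<sigma> i)"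
  unfolding Tset_def by blast

lemma canonical_rank_rev:
  assumes inj: "inj_on \<rho> {..<n + k}" and n: "1 \<le> n"
    and nonempty: "{j. j < n + k \<and> incomp_all n k (topmost (n + k) \<rho> (Suc j)) \<noteq> {}} = {..<k + 1}"
    and blocks: "\<And>j. 1 \<le> j \<Longrightarrow> j \<le> k + 1 \<Longrightarrow> \<exists>s<n + k. topmost (n + k) \<rho> j = rot (n + k) s ` {..<j}"
  shows "canonical_reversible n k (rank_rev n k \<rho>)"
proof -
  let ?\<sigma> = "topmost_list (n + k) \<rho> (k + 1)"
  let ?T = "\<lambda>j. (\<lambda>l. (CA (topmost_elem (n + k) \<rho> j), CB l)) ` incomp_all n k (topmost (n + k) \<rho> (Suc j))"
  have K: "k + 1 \<le> n + k" using n by simp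
  have "rank_rev n k \<rho> = (\<Union>j<n + k. ?T j)"
    by (rule rank_rev_topmost_elem[OF inj])
  also have "\<dots> = (\<Union>j\<in>{..<k + 1} \<union> ({..<n + k} - {..<k + 1}). ?T j)"
    using K by (intro arg_cong[where f = "\<lambda>J. \<Union>j\<in>J. ?T j"]) auto
  also have "\<dots> = (\<Union>j<k + 1. ?T j) \<union> (\<Union>j\<in>{..<n + k} - {..<k + 1}. ?T j)"
    by (rule UN_Un)
  also have "(\<Union>j\<in>{..<n + k} - {..<k + 1}. ?T j) = {}"
  proof -
    have "incomp_all n k (topmost (n + k) \<rho> (Suc j)) = {}" if "j \<in> {..<n + k} - {..<k + 1}" for j
    proof -
      from that have "j \<notin> {j. j < n + k \<and> incomp_all n k (topmost (n + k) \<rho> (Suc j)) \<noteq> {}}"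
        unfolding nonempty by simp
      with that show ?thesis by simp
    qed
    then show ?thesis by simp
  qed
  also have "(\<Union>j<k + 1. ?T j) \<union> {} = Tset n k ?\<sigma>"
    unfolding Tset_eq_UN using Tlev_topmost_list[OF inj _ K] by (simp add: image_image)
  finally show ?thesis
    unfolding canonical_reversible_def
    using h_contiguous_topmost_list[OF inj K blocks] by auto
qed

subsection \<open>The exchange argument\<close>

text \<open>Move \<open>y\<close> to just above \<open>x\<close>, keeping the order of everything else.\<close>
definition raise :: "(nat \<Rightarrow> nat) \<Rightarrow> nat \<Rightarrow> nat \<Rightarrow> nat \<Rightarrow> nat" where
  "raise \<rho> y x m = (if m = y then 2 * \<rho> x + 1 else 2 * \<rho> m)"

lemma inj_on_raise:
  assumes "inj_on \<rho> S"
  shows "inj_on (raise \<rho> y x) S"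
proof (rule inj_onI)
  fix a b assume ab: "a \<in> S" "b \<in> S" "raise \<rho> y x a = raise \<rho> y x b"
  show "a = b"
  proof (cases "a = y \<or> b = y")
    case True
    have "2 * c + 1 \<noteq> 2 * d" "2 * d \<noteq> 2 * c + 1" for c d :: nat by presburger+
    with True ab(3) show ?thesis unfolding raise_def by (cases "a = y"; cases "b = y") simp_all
  next
    case False
    with ab(3) have "\<rho> a = \<rho> b" unfolding raise_def by simp
    with ab(1,2) show ?thesis using inj_onD[OF assms] by blast
  qed
qed

lemma upset_raise:
  assumes "\<rho> y < \<rho> x" "y < N"
  shows "m \<in> upset N (raise \<rho> y x) p \<Longrightarrow> m \<in> upset N \<rho> p \<or> m = y"
    and "y \<in> upset N (raise \<rho> y x) p \<Longrightarrow> p \<noteq> y \<Longrightarrow> upset N \<rho> x \<subseteq> upset N \<rho> p"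
    and "upset N (raise \<rho> y x) y = insert y {m. m < N \<and> \<rho> x < \<rho> m}"
  using assms unfolding upset_def raise_def by (auto split: if_splits)

lemma rank_rev_subset_raise:
  assumes yx: "\<rho> y < \<rho> x" "y < n + k"
    and incomp_y: "\<forall>l\<in>incomp_all n k (upset (n + k) \<rho> x). incomp_idx n k y l"
  shows "rank_rev n k \<rho> \<subseteq> rank_rev n k (raise \<rho> y x)"
proof
  fix z assume "z \<in> rank_rev n k \<rho>"
  then obtain p l where z: "z = (CA p, CB l)" "p < n + k" "l \<in> incomp_all n k (upset (n + k) \<rho> p)"
    unfolding rank_rev_def by blast
  have "incomp_idx n k m l" if m: "m \<in> upset (n + k) (raise \<rho> y x) p" for m
  proof (cases "m \<in> upset (n + k) \<rho> p")
    case True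
    then show ?thesis using z(3) unfolding incomp_all_def by blast
  next
    case False
    then have "m = y" using upset_raise(1)[OF yx m] by blast
    moreover have "p \<noteq> y" using False \<open>m = y\<close> yx(2) by (auto simp: upset_def)
    ultimately have "upset (n + k) \<rho> x \<subseteq> upset (n + k) \<rho> p"
      using upset_raise(2)[OF yx] m by blast
    then have "l \<in> incomp_all n k (upset (n + k) \<rho> x)"
      using z(3) incomp_all_antimono by blast
    then show ?thesis using incomp_y \<open>m = y\<close> by blast
  qed
  with z show "z \<in> rank_rev n k (raise \<rho> y x)"
    by (simp add: rank_rev_iff incomp_all_def)
qed

lemma max_reversible_raise:
  assumes mr: "max_reversible n k (rank_rev n k \<rho>)" and inj: "inj_on \<rho> {..<n + k}"
    and yx: "\<rho> y < \<rho> x" "y < n + k"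
    and incomp_y: "\<forall>l\<in>incomp_all n k (upset (n + k) \<rho> x). incomp_idx n k y l"
  shows "incomp_all n k (insert y {m. m < n + k \<and> \<rho> x < \<rho> m}) \<subseteq> incomp_all n k (upset (n + k) \<rho> x)"
proof -
  have "rank_rev n k (raise \<rho> y x) = rank_rev n k \<rho>"
    using mr reversible_rank_rev[OF inj_on_raise[OF inj]] rank_rev_subset_raise[OF yx incomp_y]
    unfolding max_reversible_def by blast
  then have "CB ` incomp_all n k (upset (n + k) (raise \<rho> y x) y) = CB ` incomp_all n k (upset (n + k) \<rho> y)"
    using Bof_rank_rev[OF yx(2)] by metis
  then have "incomp_all n k (insert y {m. m < n + k \<and> \<rho> x < \<rho> m}) = incomp_all n k (upset (n + k) \<rho> y)"
    using upset_raise(3)[OF yx] inj_image_eq_iff[of CB] by (simp add: inj_def)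
  moreover have "upset (n + k) \<rho> x \<subseteq> upset (n + k) \<rho> y"
    using yx(1) unfolding upset_def by auto
  ultimately show ?thesis
    using incomp_all_antimono by blast
qed

lemma max_reversible_topmost_exchange:
  assumes mr: "max_reversible n k (rank_rev n k \<rho>)" and inj: "inj_on \<rho> {..<n + k}"
    and j: "j < n + k" and y: "y < n + k" "y \<notin> topmost (n + k) \<rho> (Suc j)"
    and incomp_y: "\<forall>l\<in>incomp_all n k (topmost (n + k) \<rho> (Suc j)). incomp_idx n k y l"
  shows "incomp_all n k (insert y (topmost (n + k) \<rho> j)) \<subseteq> incomp_all n k (topmost (n + k) \<rho> (Suc j))"
proof -
  let ?x = "topmost_elem (n + k) \<rho> j"
  have x: "?x < n + k" "above_count (n + k) \<rho> ?x = j"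
    using topmost_elem_lt[OF inj j] above_count_topmost_elem[OF inj j] .
  have top_Suc: "upset (n + k) \<rho> ?x = topmost (n + k) \<rho> (Suc j)"
    using upset_eq_topmost[OF inj x(1)] x(2) by simp
  have top: "{m. m < n + k \<and> \<rho> ?x < \<rho> m} = topmost (n + k) \<rho> j"
    unfolding topmost_def using above_count_le_iff[OF inj x(1)] x(2) by (auto simp: not_le[symmetric])
  have "\<not> above_count (n + k) \<rho> y \<le> j"
    using y unfolding topmost_def by auto
  then have "\<rho> y < \<rho> ?x"
    using above_count_le_iff[OF inj y(1) x(1)] x(2) by simp
  from max_reversible_raise[OF mr inj this y(1)] show ?thesis
    unfolding top top_Suc using incomp_y by blast
qed

subsection \<open>The first defect\<close>

lemma card_incomp_all_insert_last:
  assumes "1 \<le> m" "m \<le> k" "2 \<le> n"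
  shows "card (incomp_all n k (insert (n + k - 1) {..<m})) = k + 1 - m"
proof -
  have "incomp_all n k (insert (n + k - 1) {..<m}) = {m - 1..k - 1}"
    using incomp_all_insert_lessThan[of m "n + k - 1" n k] assms by auto
  then show ?thesis using assms by simp
qed

lemma incomp_all_insert_far:
  assumes "2 \<le> n" "1 \<le> m" "m + n \<le> e + 1" "e \<le> k"
  shows "incomp_all n k (insert e {..<m}) = {e..k} \<union> {m - 1..e - n}"
proof -
  have "f \<le> e - n \<longleftrightarrow> f + n \<le> e" for f using assms by linarith
  moreover have "m - 1 \<le> e" using assms by linarith
  ultimately show ?thesis
    using incomp_all_insert_lessThan[of m e n k] assms by auto
qed

lemma card_incomp_all_insert_far:
  assumes "2 \<le> n" "1 \<le> m" "m + n \<le> e + 1" "e \<le> k"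
  shows "card (incomp_all n k (insert e {..<m})) = k + 3 - m - n"
proof -
  have "{e..k} \<inter> {m - 1..e - n} = {}" using assms by auto
  then have "card ({e..k} \<union> {m - 1..e - n}) = card {e..k} + card {m - 1..e - n}"
    by (simp add: card_Un_disjoint)
  then show ?thesis
    using incomp_all_insert_far[OF assms] assms by simp
qed

lemma card_incomp_all_insert_insert_far:
  assumes "2 \<le> n" "1 \<le> m" "m + n \<le> e + 1" "e \<le> k"
    and e': "e' < n + k" "e' \<notin> insert e {..<m}"
  shows "card (incomp_all n k (insert e' (insert e {..<m}))) < card (incomp_all n k (insert e {..<m}))"
proof -
  let ?S = "incomp_all n k (insert e {..<m})"
  obtain f where f: "f \<in> ?S" "\<not> incomp_idx n k e' f"
  proof (cases "e' < e")
    case True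
    let ?f = "min (e' - 1) (e - n)"
    show ?thesis
      by (rule that[of ?f]) (use True e' assms in \<open>auto simp: incomp_all_insert_far incomp_idx_iff\<close>)
  next
    case False
    let ?f = "max e (e' + 1 - n)"
    show ?thesis
      by (rule that[of ?f]) (use False e' assms in \<open>auto simp: incomp_all_insert_far incomp_idx_iff\<close>)
  qed
  have "incomp_all n k (insert e' (insert e {..<m})) \<subseteq> ?S - {f}"
    using f unfolding incomp_all_def by auto
  then show ?thesis
    using f(1) by (meson finite_incomp_all card_mono finite_Diff card_Diff1_less order_le_less_trans)
qed

text \<open>\<open>e\<close> is the offset of the \<open>(m + 1)\<close>-st element from the block formed by the top \<open>m\<close>;
  the element at offset \<open>e'\<close> could be raised in its place.\<close>
lemma block_exchange:
  assumes mr: "max_reversible n k (rank_rev n k \<rho>)" and inj: "inj_on \<rho> {..<n + k}"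
    and m: "m < n + k" and e: "e < n + k"
    and top: "topmost (n + k) \<rho> m = rot (n + k) s ` {..<m}"
    and top_Suc: "topmost (n + k) \<rho> (Suc m) = rot (n + k) s ` insert e {..<m}"
    and e': "e' < n + k" "e' \<notin> insert e {..<m}"
    and incomp_e': "\<forall>f\<in>incomp_all n k (insert e {..<m}). incomp_idx n k e' f"
  shows "card (incomp_all n k (insert e' {..<m})) \<le> card (incomp_all n k (insert e {..<m}))"
proof -
  let ?N = "n + k"
  have N: "0 < ?N" using m by linarith
  have E: "insert e {..<m} \<subseteq> {..<?N}" "insert e' {..<m} \<subseteq> {..<?N}"
    using e e'(1) m by auto
  have "rot ?N s e' \<notin> topmost ?N \<rho> (Suc m)"
    unfolding top_Suc using inj_on_image_mem_iff[OF inj_on_rot _ E(1)] e' by simp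
  moreover have "\<forall>l\<in>incomp_all n k (topmost ?N \<rho> (Suc m)). incomp_idx n k (rot ?N s e') l"
    unfolding top_Suc incomp_all_rot[OF E(1) N]
    using incomp_e' incomp_idx_rot[OF e'(1)] by (auto simp: incomp_all_def)
  ultimately have "incomp_all n k (insert (rot ?N s e') (topmost ?N \<rho> m))
      \<subseteq> incomp_all n k (topmost ?N \<rho> (Suc m))"
    using max_reversible_topmost_exchange[OF mr inj m rot_lt[OF N]] by blast
  then have "card (incomp_all n k (rot ?N s ` insert e' {..<m}))
      \<le> card (incomp_all n k (rot ?N s ` insert e {..<m}))"
    unfolding top top_Suc by (simp add: card_mono)
  then show ?thesis
    unfolding card_incomp_all_rot[OF E(1) N] card_incomp_all_rot[OF E(2) N] .
qed

lemma incomp_all_insert_near: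
  assumes "2 \<le> n" "1 \<le> m" "m \<le> k" "m < e" "e + 1 < m + n" "e < n + k"
  shows "card (incomp_all n k (insert e {..<m})) < k + 1 - m"
    and "\<forall>f\<in>incomp_all n k (insert e {..<m}). incomp_idx n k m f"
proof -
  have S: "incomp_all n k (insert e {..<m}) \<subseteq> {e..k}"
    using incomp_all_insert_lessThan[of m e n k] assms by auto
  then show "card (incomp_all n k (insert e {..<m})) < k + 1 - m"
    using card_mono[OF _ S] assms by simp
  show "\<forall>f\<in>incomp_all n k (insert e {..<m}). incomp_idx n k m f"
    using S assms by (auto simp: incomp_idx_iff)
qed

lemma incomp_all_insert_beyond:
  assumes "2 \<le> n" "1 \<le> m" "m \<le> k" "k < e" "e + 1 < n + k"
  shows "card (incomp_all n k (insert e {..<m})) < k + 1 - m"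
    and "\<forall>f\<in>incomp_all n k (insert e {..<m}). incomp_idx n k (n + k - 1) f"
proof -
  have S: "incomp_all n k (insert e {..<m}) \<subseteq> {m - 1..<e + 1 - n}"
    using incomp_all_insert_lessThan[of m e n k] assms by auto
  then show "card (incomp_all n k (insert e {..<m})) < k + 1 - m"
    using card_mono[OF _ S] assms by simp
  show "\<forall>f\<in>incomp_all n k (insert e {..<m}). incomp_idx n k (n + k - 1) f"
  proof
    fix f assume "f \<in> incomp_all n k (insert e {..<m})"
    then have "f < e + 1 - n" using S by auto
    then have "f + n \<le> e" by linarith
    then show "incomp_idx n k (n + k - 1) f"
      using assms by (subst incomp_idx_iff) auto
  qed
qed

lemma first_defect_position:
  assumes n: "3 \<le> n" and mr: "max_reversible n k (rank_rev n k \<rho>)" and inj: "inj_on \<rho> {..<n + k}"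
    and m: "1 \<le> m" "m \<le> k" and e: "e < n + k" "m \<le> e"
    and top: "topmost (n + k) \<rho> m = rot (n + k) s ` {..<m}"
    and top_Suc: "topmost (n + k) \<rho> (Suc m) = rot (n + k) s ` insert e {..<m}"
    and defect: "card (incomp_all n k (insert e {..<m})) \<noteq> k + 1 - m"
  shows "m + n \<le> e + 1" "e \<le> k"
proof -
  have exchange: "card (incomp_all n k (insert e' {..<m})) \<le> card (incomp_all n k (insert e {..<m}))"
    if "e' < n + k" "e' \<notin> insert e {..<m}"
      "\<forall>f\<in>incomp_all n k (insert e {..<m}). incomp_idx n k e' f" for e'
    using block_exchange[OF mr inj _ e(1) top top_Suc that] m n by simp
  have "e \<noteq> m"
    using defect card_incomp_all_lessThan[of "Suc m" k n] m n by (auto simp: lessThan_Suc)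
  have "e \<noteq> n + k - 1"
    using defect card_incomp_all_insert_last[OF m] n by auto
  show "m + n \<le> e + 1"
  proof (rule ccontr)
    assume "\<not> m + n \<le> e + 1"
    then show False
      using incomp_all_insert_near[of n m k e] exchange[of m] card_incomp_all_lessThan[of "Suc m" k n]
        \<open>e \<noteq> m\<close> e m n by (simp add: lessThan_Suc)
  qed
  show "e \<le> k"
  proof (rule ccontr)
    assume "\<not> e \<le> k"
    moreover have "n + k - 1 \<notin> insert e {..<m}" "n + k - 1 < n + k" "e + 1 < n + k"
      using \<open>e \<noteq> n + k - 1\<close> e(1) m n by auto
    ultimately show False
      using incomp_all_insert_beyond[of n m k e] exchange[of "n + k - 1"]
        card_incomp_all_insert_last[OF m, of n] \<open>e \<noteq> n + k - 1\<close> e m n by simp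
  qed
qed

lemma card_incomp_all_topmost_Suc_less:
  assumes inj: "inj_on \<rho> {..<n + k}" and i: "i < n + k"
    and top: "topmost (n + k) \<rho> i = rot (n + k) s ` insert e {..<m}" and "e < n + k"
    and far: "2 \<le> n" "1 \<le> m" "m + n \<le> e + 1" "e \<le> k"
  shows "card (incomp_all n k (topmost (n + k) \<rho> (Suc i))) < card (incomp_all n k (topmost (n + k) \<rho> i))"
proof -
  let ?N = "n + k"
  have N: "0 < ?N" using i by linarith
  obtain e' where e': "e' < ?N" "e' \<notin> insert e {..<m}"
    and top_Suc: "topmost ?N \<rho> (Suc i) = rot ?N s ` insert e' (insert e {..<m})"
    using topmost_Suc_rot[OF inj i top] by blast
  have E: "insert e {..<m} \<subseteq> {..<?N}" "insert e' (insert e {..<m}) \<subseteq> {..<?N}"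
    using e' \<open>e < ?N\<close> far by auto
  show ?thesis
    unfolding top top_Suc card_incomp_all_rot[OF E(1) N] card_incomp_all_rot[OF E(2) N]
    using card_incomp_all_insert_insert_far[OF far e'] .
qed

lemma first_defect:
  assumes n: "3 \<le> n" and mr: "max_reversible n k (rank_rev n k \<rho>)" and inj: "inj_on \<rho> {..<n + k}"
    and i: "2 \<le> i" "i \<le> k + 1"
    and top: "topmost (n + k) \<rho> (i - 1) = rot (n + k) s ` {..<i - 1}"
    and defect: "card (incomp_all n k (topmost (n + k) \<rho> i)) \<noteq> k + 2 - i"
  shows "i + n \<le> k + 2" "card (incomp_all n k (topmost (n + k) \<rho> i)) + i + n = k + 4"
    and "\<And>j. i < j \<Longrightarrow> j \<le> k + 1 \<Longrightarrow> card (incomp_all n k (topmost (n + k) \<rho> j)) + i + n \<le> k + 3"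
proof -
  let ?N = "n + k"
  let ?c = "\<lambda>j. card (incomp_all n k (topmost ?N \<rho> j))"
  define m where "m = i - 1"
  have m: "1 \<le> m" "m \<le> k" "i = Suc m" "m < ?N" using i n unfolding m_def by auto
  obtain e where e: "e < ?N" "m \<le> e" and top_i: "topmost ?N \<rho> i = rot ?N s ` insert e {..<m}"
    using topmost_Suc_rot[OF inj m(4) top[folded m_def]] m(3) by (metis lessThan_iff not_le)
  have card_i: "?c i = card (incomp_all n k (insert e {..<m}))"
    unfolding top_i by (rule card_incomp_all_rot) (use e m in auto)
  have pos: "m + n \<le> e + 1" "e \<le> k"
    using first_defect_position[OF n mr inj m(1,2) e top[folded m_def]] top_i defect card_i m(3)
    by auto
  then show "i + n \<le> k + 2" using m(3) by simp
  show card_i': "?c i + i + n = k + 4"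
    using card_i card_incomp_all_insert_far[of n m e k] pos n m by simp
  fix j assume j: "i < j" "j \<le> k + 1"
  have "?c j \<le> ?c (Suc i)"
    using j by (intro card_mono[OF finite_incomp_all] incomp_all_antimono topmost_mono) simp
  also have "\<dots> < ?c i"
    using card_incomp_all_topmost_Suc_less[OF inj _ top_i e(1) _ m(1) pos] j n by simp
  finally show "?c j + i + n \<le> k + 3"
    using card_i' by linarith
qed

lemma card_incomp_all_block:
  assumes "2 \<le> n" "1 \<le> j" "j \<le> k + 1" "topmost (n + k) \<rho> j = rot (n + k) s ` {..<j}"
  shows "card (incomp_all n k (topmost (n + k) \<rho> j)) = k + 2 - j"
  using card_incomp_all_rot[of "{..<j}" n k s] card_incomp_all_lessThan[of j k n] assms by simp

lemma first_defect_le: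
  assumes n: "3 \<le> n" and inj: "inj_on \<rho> {..<n + k}"
    and nonempty: "{j. j < n + k \<and> incomp_all n k (topmost (n + k) \<rho> (Suc j)) \<noteq> {}} = {..<k + 1}"
    and not_canonical: "\<not> canonical_reversible n k (rank_rev n k \<rho>)"
    and no_defect: "\<And>j. 1 \<le> j \<Longrightarrow> j < i \<Longrightarrow> j \<le> k + 1 \<Longrightarrow> card (incomp_all n k (topmost (n + k) \<rho> j)) = k + 2 - j"
  shows "i \<le> k + 1"
proof (rule ccontr)
  assume "\<not> i \<le> k + 1"
  have "\<exists>s<n + k. topmost (n + k) \<rho> j = rot (n + k) s ` {..<j}" if "1 \<le> j" "j \<le> k + 1" for j
    by (rule topmost_block[OF n inj that]) (use no_defect that \<open>\<not> i \<le> k + 1\<close> in auto)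
  then show False
    using canonical_rank_rev[OF inj _ nonempty] n not_canonical by simp
qed

lemma topmost_block_before_defect:
  assumes n: "3 \<le> n" and inj: "inj_on \<rho> {..<n + k}" and i: "1 \<le> i" "i \<le> k + 1"
    and no_defect: "\<And>j. 1 \<le> j \<Longrightarrow> j < i \<Longrightarrow> card (incomp_all n k (topmost (n + k) \<rho> j)) = k + 2 - j"
    and defect: "card (incomp_all n k (topmost (n + k) \<rho> i)) \<noteq> k + 2 - i"
  obtains s where "2 \<le> i" "topmost (n + k) \<rho> (i - 1) = rot (n + k) s ` {..<i - 1}"
proof -
  have N: "0 < n + k" using n by simp
  have "card (incomp_all n k (topmost (n + k) \<rho> 1)) = k + 1"
    using card_incomp_all_block[OF _ _ _ topmost_one[OF inj N]] n by simp
  then have "i \<noteq> 1" using defect by auto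
  then have "2 \<le> i" using i by simp
  moreover have "\<exists>s<n + k. topmost (n + k) \<rho> (i - 1) = rot (n + k) s ` {..<i - 1}"
    by (rule topmost_block[OF n inj]) (use no_defect i \<open>2 \<le> i\<close> in auto)
  ultimately show ?thesis using that by blast
qed

theorem lemma3p2:
  fixes n k i :: nat and R :: "(celem \<times> celem) set" and x :: "nat \<Rightarrow> celem"
  assumes "n \<ge> 3"
    and "max_reversible n k R"
    and "\<not> canonical_reversible n k R"
    and "consistent_labeling k R x"
    and "i \<ge> 1" and "int (card (Bof (x i) R)) \<noteq> int k + 2 - int i"
    and "\<forall>j. 1 \<le> j \<and> j < i \<longrightarrow> int (card (Bof (x j) R)) = int k + 2 - int j"
  shows "2 \<le> i \<and> int i \<le> int k - int n + 2
    \<and> int (card (Bof (x i) R)) = int k + 4 - int i - int n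
    \<and> (\<forall>j \<in> {i+1..k+1}. int (card (Bof (x j) R)) \<le> int k + 3 - int i - int n)"
proof -
  obtain \<rho> where inj: "inj_on \<rho> {..<n + k}" and R: "R = rank_rev n k \<rho>"
    using max_reversible_rank_rev[OF assms(2)] .
  let ?c = "\<lambda>j. card (incomp_all n k (topmost (n + k) \<rho> j))"
  have nonempty: "{j. j < n + k \<and> incomp_all n k (topmost (n + k) \<rho> (Suc j)) \<noteq> {}} = {..<k + 1}"
    and card_x: "\<And>a. 1 \<le> a \<Longrightarrow> a \<le> k + 1 \<Longrightarrow> card (Bof (x a) R) = ?c a"
    using consistent_labeling_rank_rev[OF inj _ assms(4)[unfolded R]] assms(1) R by auto
  have no_defect: "?c j = k + 2 - j" if "1 \<le> j" "j < i" "j \<le> k + 1" for j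
  proof -
    from assms(7) that(1,2) have "int (card (Bof (x j) R)) = int k + 2 - int j" by simp
    then show ?thesis using card_x[OF that(1,3)] that(3) by linarith
  qed
  have "i \<le> k + 1"
    using first_defect_le[OF assms(1) inj nonempty _ no_defect] assms(3) R by blast
  have defect: "?c i \<noteq> k + 2 - i"
    using assms(5,6) card_x \<open>i \<le> k + 1\<close> by auto
  obtain s where "2 \<le> i" and top: "topmost (n + k) \<rho> (i - 1) = rot (n + k) s ` {..<i - 1}"
    using topmost_block_before_defect[OF assms(1) inj assms(5) \<open>i \<le> k + 1\<close> _ defect] no_defect
      \<open>i \<le> k + 1\<close> by auto
  note first = first_defect[OF assms(1) assms(2)[unfolded R] inj \<open>2 \<le> i\<close> \<open>i \<le> k + 1\<close> top defect]
  have "\<forall>j \<in> {i+1..k+1}. int (card (Bof (x j) R)) \<le> int k + 3 - int i - int n"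
  proof
    fix j assume "j \<in> {i+1..k+1}"
    then have "card (Bof (x j) R) + i + n \<le> k + 3" using first(3) card_x assms(5) by simp
    then show "int (card (Bof (x j) R)) \<le> int k + 3 - int i - int n" by linarith
  qed
  then show ?thesis
    using first(1,2) card_x[OF assms(5) \<open>i \<le> k + 1\<close>] \<open>2 \<le> i\<close> by linarith
qed

end
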